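(* Let $N_d \le N_m$ be positive integers, let $\Phi_{\mathbf{y}} \in \mathbb{C}^{N_m \times N_m}$ be Hermitian positive definite with largest and smallest eigenvalues $\lambda_{max}$ and $\lambda_{min}$, let $\mathbf{g} \in \mathbb{C}^{N_m}$ be nonzero, and let $\mathbf{\Psi} \in \mathbb{C}^{N_d \times N_m}$. Let $\delta \in (0,1)$ be such that (i) every eigenvalue of $\mathbf{\Psi}\mathbf{\Psi}^H$ lies in $[1-\delta,\,1+\delta]$, and (ii) $(1-\delta)\|\mathbf{g}\|^2 \le \|\mathbf{\Psi}\mathbf{g}\|^2 \le (1+\delta)\|\mathbf{g}\|^2$. Define the full-complexity MVDR output power $p_{MVDR} = \left(\mathbf{g}^H \Phi_{\mathbf{y}}^{-1}\mathbf{g}\right)^{-1}$, the compressed MVDR output power $p_{CMVDR} = \left(\mathbf{g}^H \mathbf{\Psi}^H (\mathbf{\Psi}\Phi_{\mathbf{y}}\mathbf{\Psi}^H)^{-1}\mathbf{\Psi}\mathbf{g}\right)^{-1}$, and the regret $R = p_{CMVDR} - p_{MVDR}$. Then $$\frac{\lambda_{min}}{\|\mathbf{g}\|^2} \le p_{MVDR} \le \frac{\lambda_{max}}{\|\mathbf{g}\|^2},\qquad \frac{(1-\delta)\lambda_{min}}{(1+\delta)\|\mathbf{g}\|^2} \le p_{CMVDR} \le \frac{(1+\delta)\lambda_{max}}{(1-\delta)\|\mathbf{g}\|^2},$$ and consequently $$\frac{(1-\delta)\lambda_{min}}{(1+\delta)\|\mathbf{g}\|^2} - \frac{\lambda_{max}}{\|\mathbf{g}\|^2}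 \le R \le \frac{(1+\delta)\lambda_{max}}{(1-\delta)\|\mathbf{g}\|^2} - \frac{\lambda_{min}}{\|\mathbf{g}\|^2}.$$
   Context: $\Phi_{\mathbf{y}}$ models the correlation matrix of the $N_m$ microphone signals, $\mathbf{g}$ is the steering vector to the desired source, and $\mathbf{\Psi}$ is a (random) projection to $N_d$ dimensions; $p_{MVDR}$ and $p_{CMVDR}$ are the output powers of the minimum variance distortionless response beamformer in the full sensor space and in the projected space respectively. Hypotheses (i) and (ii) are the consequences of the restricted isometry property with constant $\delta$ that the paper uses. $\|\cdot\|$ is the Euclidean norm and $^H$ the conjugate transpose. *)

theory Defs
  imports "Jordan_Normal_Form.Schur_Decomposition" "Jordan_Normal_Form.Char_Poly"
          "Jordan_Normal_Form.Gauss_Jordan_Elimination"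
begin

definition cvec_norm :: "complex vec \<Rightarrow> real" where
  "cvec_norm v = sqrt (\<Sum>i<dim_vec v. (cmod (v $ i))^2)"

text \<open>Hermitian form v^H A v.\<close>
definition quad_form :: "complex mat \<Rightarrow> complex vec \<Rightarrow> complex" where
  "quad_form A v = (A *\<^sub>v v) \<bullet>c v"

definition herm_pos_def :: "nat \<Rightarrow> complex mat \<Rightarrow> bool" where
  "herm_pos_def n A \<longleftrightarrow> A \<in> carrier_mat n n \<and> mat_adjoint A = A \<and>
     (\<forall>v \<in> carrier_vec n. v \<noteq> 0\<^sub>v n \<longrightarrow> quad_form A v \<in> \<real> \<and> Re (quad_form A v) > 0)"

definition minv :: "complex mat \<Rightarrow> complex mat" where
  "minv A = the (mat_inverse A)"

text \<open>MVDR output power (g^H Phi^-1 g)^-1; the quadratic form is real for Hermitian Phi.\<close>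
definition p_mvdr :: "complex mat \<Rightarrow> complex vec \<Rightarrow> real" where
  "p_mvdr Phi g = inverse (Re (quad_form (minv Phi) g))"

definition p_cmvdr :: "complex mat \<Rightarrow> complex mat \<Rightarrow> complex vec \<Rightarrow> real" where
  "p_cmvdr Phi Psi g =
     inverse (Re (quad_form (mat_adjoint Psi * minv (Psi * Phi * mat_adjoint Psi) * Psi) g))"

end

theory Submission
  imports Defs "Jordan_Normal_Form.Spectral_Radius"
begin

(* For a Hermitian matrix A whose eigenvalues lie in [m, M], the Rayleigh quotient
   x^H A x / |x|^2 lies in [m, M]; by induction on the dimension, a unitary change of basis
   whose first column is an eigenvector splits A into that eigenvalue and a Hermitian block of
   smaller size with eigenvalues among those of A. Since Phi^-1 has its spectrum in
   [1/lambda_max, 1/lambda_min], this gives the bounds on p_MVDR = 1 / (g^H Phi^-1 g).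
   The compressed beamformer is the MVDR beamformer for the covariance Psi Phi Psi^H and the
   steering vector Psi g. With y = Psi^H x we have x^H Psi Phi Psi^H x = y^H Phi y and
   |y|^2 = x^H Psi Psi^H x, which lies in [1 - delta, 1 + delta] |x|^2 by (i); hence the
   spectrum of Psi Phi Psi^H lies in [(1 - delta) lambda_min, (1 + delta) lambda_max], and (ii)
   bounds |Psi g|^2. The bounds on the regret are differences of the bounds on the two powers. *)

section \<open>The adjoint and the Hermitian inner product\<close>

lemma mat_adjoint_carrier: "A \<in> carrier_mat r c \<Longrightarrow> mat_adjoint A \<in> carrier_mat c r"
  unfolding mat_adjoint_def by (auto simp: mat_of_rows_def)

lemma dim_mat_adjoint [simp]:
  "dim_row (mat_adjoint A) = dim_col A" "dim_col (mat_adjoint A) = dim_row A"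
  unfolding mat_adjoint_def by (auto simp: mat_of_rows_def)

lemma index_mat_adjoint [simp]:
  "i < dim_col A \<Longrightarrow> j < dim_row A \<Longrightarrow> mat_adjoint A $$ (i, j) = cnj (A $$ (j, i))"
  unfolding mat_adjoint_def by (auto simp: mat_of_rows_def)

lemma mat_adjoint_adjoint [simp]: "mat_adjoint (mat_adjoint (A :: complex mat)) = A"
  by (rule eq_matI) auto

lemma mat_adjoint_one [simp]: "mat_adjoint (1\<^sub>m n :: complex mat) = 1\<^sub>m n"
  by (rule eq_matI) auto

lemma mat_adjoint_mult:
  assumes "(A :: complex mat) \<in> carrier_mat r k" "B \<in> carrier_mat k c"
  shows "mat_adjoint (A * B) = mat_adjoint B * mat_adjoint A"
  using assms by (intro eq_matI) (auto simp: scalar_prod_def intro!: sum.cong)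

lemma cscalar_prod_sum: "dim_vec w = n \<Longrightarrow> v \<bullet>c w = (\<Sum>i<n. v $ i * cnj (w $ i))"
  unfolding scalar_prod_def by (auto simp: atLeast0LessThan)

lemma cscalar_prod_swap:
  "v \<in> carrier_vec n \<Longrightarrow> w \<in> carrier_vec n \<Longrightarrow> v \<bullet>c w = cnj (w \<bullet>c v)"
  by (simp add: cscalar_prod_sum mult.commute)

lemma cscalar_prod_mult_mat_vec:
  assumes "(B :: complex mat) \<in> carrier_mat r c" "y \<in> carrier_vec c" "z \<in> carrier_vec r"
  shows "(B *\<^sub>v y) \<bullet>c z = y \<bullet>c (mat_adjoint B *\<^sub>v z)"
proof -
  have "(B *\<^sub>v y) \<bullet>c z = (\<Sum>i<r. \<Sum>j<c. B $$ (i, j) * y $ j * cnj (z $ i))"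
    using assms by (simp add: cscalar_prod_sum mult_mat_vec_def scalar_prod_def atLeast0LessThan
        sum_distrib_right)
  also have "\<dots> = (\<Sum>j<c. \<Sum>i<r. B $$ (i, j) * y $ j * cnj (z $ i))"
    by (rule sum.swap)
  also have "\<dots> = y \<bullet>c (mat_adjoint B *\<^sub>v z)"
    using assms by (simp add: cscalar_prod_sum mult_mat_vec_def scalar_prod_def atLeast0LessThan
        sum_distrib_left mult_ac)
  finally show ?thesis .
qed

lemma cscalar_prod_self_real: "v \<bullet>c v = of_real (Re (v \<bullet>c v))"
  using conjugate_square_ge_0_vec[of v] by (simp add: less_eq_complex_def complex_eq_iff)

lemma cvec_norm_sq: "(cvec_norm v)\<^sup>2 = Re (v \<bullet>c v)"
proof -
  have "v \<bullet>c v = (\<Sum>i<dim_vec v. of_real ((cmod (v $ i))\<^sup>2))"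
    by (simp only: cscalar_prod_sum[OF refl] complex_norm_square)
  then show ?thesis
    unfolding cvec_norm_def by (simp add: sum_nonneg flip: of_real_sum)
qed

lemma cvec_norm_pos: "v \<in> carrier_vec n \<Longrightarrow> v \<noteq> 0\<^sub>v n \<Longrightarrow> 0 < (cvec_norm v)\<^sup>2"
  unfolding cvec_norm_sq using conjugate_square_greater_0_vec[of v n]
  by (simp add: less_complex_def)

lemma conjugate_append_vec: "conjugate (a @\<^sub>v d) = conjugate a @\<^sub>v (conjugate d :: complex vec)"
  by (intro eq_vecI) auto

lemma cvec_norm_zero [simp]: "cvec_norm (0\<^sub>v n) = 0"
  unfolding cvec_norm_def by simp

lemma cvec_norm_append:
  assumes "a \<in> carrier_vec n" "d \<in> carrier_vec m"
  shows "(cvec_norm (a @\<^sub>v d))\<^sup>2 = (cvec_norm a)\<^sup>2 + (cvec_norm d)\<^sup>2"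
  unfolding cvec_norm_sq conjugate_append_vec using assms
  by (simp add: scalar_prod_append[of _ n _ m])

section \<open>Hermitian and unitary matrices\<close>

definition hermitian_mat :: "nat \<Rightarrow> complex mat \<Rightarrow> bool" where
  "hermitian_mat n A \<longleftrightarrow> A \<in> carrier_mat n n \<and> mat_adjoint A = A"

definition unitary_mat :: "nat \<Rightarrow> complex mat \<Rightarrow> bool" where
  "unitary_mat n U \<longleftrightarrow> U \<in> carrier_mat n n \<and> mat_adjoint U * U = 1\<^sub>m n"

lemma unitary_mat_right_inverse: "unitary_mat n U \<Longrightarrow> U * mat_adjoint U = 1\<^sub>m n"
  unfolding unitary_mat_def by (metis mat_adjoint_carrier mat_mult_left_right_inverse)

lemma quad_form_congruence:
  assumes "B \<in> carrier_mat r c" "A \<in> carrier_mat r r" "x \<in> carrier_vec c"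
  shows "quad_form (mat_adjoint B * A * B) x = quad_form A (B *\<^sub>v x)"
proof -
  have B': "mat_adjoint B \<in> carrier_mat c r"
    using assms(1) by (rule mat_adjoint_carrier)
  then have "(mat_adjoint B * A * B) *\<^sub>v x = (mat_adjoint B * A) *\<^sub>v (B *\<^sub>v x)"
    using assms by (intro assoc_mult_mat_vec[of _ c r]) auto
  also have "\<dots> = mat_adjoint B *\<^sub>v (A *\<^sub>v (B *\<^sub>v x))"
    using assms B' by (intro assoc_mult_mat_vec[of _ c r _ r]) auto
  finally have "quad_form (mat_adjoint B * A * B) x = (mat_adjoint B *\<^sub>v (A *\<^sub>v (B *\<^sub>v x))) \<bullet>c x"
    unfolding quad_form_def by simp
  also have "\<dots> = (A *\<^sub>v (B *\<^sub>v x)) \<bullet>c (B *\<^sub>v x)"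
    using cscalar_prod_mult_mat_vec[OF B', of "A *\<^sub>v (B *\<^sub>v x)" x] assms by simp
  finally show ?thesis
    unfolding quad_form_def .
qed

lemma quad_form_one: "x \<in> carrier_vec n \<Longrightarrow> Re (quad_form (1\<^sub>m n) x) = (cvec_norm x)\<^sup>2"
  unfolding quad_form_def cvec_norm_sq by simp

lemma quad_form_block_diag:
  assumes "A \<in> carrier_mat n n" "D \<in> carrier_mat m m" "a \<in> carrier_vec n" "d \<in> carrier_vec m"
  shows "quad_form (four_block_mat A (0\<^sub>m n m) (0\<^sub>m m n) D) (a @\<^sub>v d)
    = quad_form A a + quad_form D d"
  unfolding quad_form_def conjugate_append_vec using assms
  by (simp add: mult_mat_vec_split scalar_prod_append[of _ n _ m])

lemma hermitian_congruence:
  assumes "hermitian_mat r A" "B \<in> carrier_mat r c"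
  shows "hermitian_mat c (mat_adjoint B * A * B)"
proof -
  have A: "A \<in> carrier_mat r r" "mat_adjoint A = A"
    using assms(1) unfolding hermitian_mat_def by auto
  have BA: "mat_adjoint B * A \<in> carrier_mat c r"
    using A assms(2) by (metis mat_adjoint_carrier mult_carrier_mat)
  have "mat_adjoint (mat_adjoint B * A * B) = mat_adjoint B * mat_adjoint (mat_adjoint B * A)"
    using mat_adjoint_mult[OF BA assms(2)] .
  also have "mat_adjoint (mat_adjoint B * A) = A * B"
    using mat_adjoint_mult[OF mat_adjoint_carrier[OF assms(2)] A(1)] A(2) by simp
  finally show ?thesis
    unfolding hermitian_mat_def using A assms(2) BA mat_adjoint_carrier[OF assms(2)]
    by (simp add: assoc_mult_mat[of _ c r A r B c])
qed

lemma hermitian_quad_form_real: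
  assumes "hermitian_mat n A" "v \<in> carrier_vec n"
  shows "quad_form A v = of_real (Re (quad_form A v))"
proof -
  have "quad_form A v = cnj (quad_form A v)"
    using assms unfolding hermitian_mat_def quad_form_def
    by (metis cscalar_prod_mult_mat_vec cscalar_prod_swap mult_mat_vec_carrier)
  then show ?thesis
    by (simp add: complex_eq_iff)
qed

lemma quad_form_eigenvector: "eigenvector A x k \<Longrightarrow> quad_form A x = k * (x \<bullet>c x)"
  unfolding eigenvector_def quad_form_def
  by (simp add: cscalar_prod_sum[OF refl] sum_distrib_left mult.assoc)

lemma quad_form_eigenvector_Re:
  "eigenvector A x k \<Longrightarrow> Re (quad_form A x) = Re k * (cvec_norm x)\<^sup>2"
  unfolding quad_form_eigenvector cvec_norm_sq by (subst cscalar_prod_self_real) simp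

lemma hermitian_eigenvalue_real:
  assumes "hermitian_mat n A" "eigenvalue A k"
  shows "k \<in> \<real>"
proof -
  obtain x where x: "eigenvector A x k"
    using assms(2) unfolding eigenvalue_def by blast
  then have x_carrier: "x \<in> carrier_vec n" and "x \<noteq> 0\<^sub>v n"
    using assms(1) unfolding eigenvector_def hermitian_mat_def by auto
  then have "x \<bullet>c x \<noteq> 0"
    by simp
  then have "k = quad_form A x / (x \<bullet>c x)"
    unfolding quad_form_eigenvector[OF x] by simp
  also have "\<dots> = of_real (Re (quad_form A x) / Re (x \<bullet>c x))"
    by (subst hermitian_quad_form_real[OF assms(1) x_carrier], subst cscalar_prod_self_real) simp
  finally show ?thesis
    by simp
qed

lemma unitary_mat_of_orthonormal_cols:
  assumes "set vs \<subseteq> carrier_vec n" "length vs = n"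
    and "\<And>i j. i < n \<Longrightarrow> j < n \<Longrightarrow> vs ! j \<bullet>c vs ! i = (if i = j then 1 else 0)"
  shows "unitary_mat n (mat_of_cols n vs)"
  unfolding unitary_mat_def
proof
  show W: "mat_of_cols n vs \<in> carrier_mat n n"
    using mat_of_cols_carrier(1)[of n vs] assms(2) by simp
  have "(mat_adjoint (mat_of_cols n vs) * mat_of_cols n vs) $$ (i, j) = 1\<^sub>m n $$ (i, j)"
    if "i < n" "j < n" for i j
  proof -
    have "vs ! i \<in> carrier_vec n" "vs ! j \<in> carrier_vec n"
      using assms(1,2) that by auto
    then have "(mat_adjoint (mat_of_cols n vs) * mat_of_cols n vs) $$ (i, j) = vs ! j \<bullet>c vs ! i"
      using that assms(2)
      by (simp add: scalar_prod_def mat_of_cols_index atLeast0LessThan cscalar_prod_sum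
          mult.commute)
    then show ?thesis
      using assms(3) that by simp
  qed
  then show "mat_adjoint (mat_of_cols n vs) * mat_of_cols n vs = 1\<^sub>m n"
    using W by (intro eq_matI) auto
qed

lemma unitary_completion:
  assumes u: "u \<in> carrier_vec n" "u \<noteq> 0\<^sub>v n"
  obtains W c where "unitary_mat n W" "col W 0 = c \<cdot>\<^sub>v u"
proof -
  interpret cof_vec_space n "TYPE(complex)" .
  define b where "b = basis_completion u"
  from basis_completion[OF u, folded b_def]
  have b: "set b \<subseteq> carrier_vec n" "distinct b" "\<not> lin_dep (set b)" "length b = n" "hd b = u"
    by auto
  define ws where "ws = gram_schmidt n b"
  from gram_schmidt_result[OF b(1-3) ws_def]
  have ws: "corthogonal ws" "set ws \<subseteq> carrier_vec n" "length ws = n"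
    using b by auto
  have "n \<noteq> 0"
    using u by auto
  then obtain bs where "b = u # bs"
    using b(4,5) by (cases b) auto
  then have "hd ws = u"
    unfolding ws_def using gram_schmidt_hd[OF u(1)] by simp
  then have ws0: "ws ! 0 = u"
    using ws(3) \<open>n \<noteq> 0\<close> by (cases ws) auto
  define scale :: "complex vec \<Rightarrow> complex"
    where "scale w = of_real (1 / sqrt (Re (w \<bullet>c w)))" for w
  define vs where "vs = map (\<lambda>w. scale w \<cdot>\<^sub>v w) ws"
  have orthonormal: "vs ! j \<bullet>c vs ! i = (if i = j then 1 else 0)" if ij: "i < n" "j < n" for i j
  proof -
    have carrier: "ws ! i \<in> carrier_vec n" "ws ! j \<in> carrier_vec n"
      using ws(2,3) ij by auto
    have "vs ! j \<bullet>c vs ! i = scale (ws ! j) * cnj (scale (ws ! i)) * (ws ! j \<bullet>c ws ! i)"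
      unfolding vs_def using ij ws(3) carrier
      by (simp add: cscalar_prod_sum sum_distrib_left mult_ac)
    also have "\<dots> = (if i = j then 1 else 0)"
    proof (cases "i = j")
      case True
      define r where "r = Re (ws ! i \<bullet>c ws ! i)"
      have "ws ! i \<bullet>c ws ! i \<noteq> 0"
        using corthogonalD[OF ws(1)] ij ws(3) by auto
      then have "0 < r"
        unfolding r_def by (metis carrier(1) conjugate_square_eq_0_vec cvec_norm_pos cvec_norm_sq)
      then have "1 / sqrt r * (1 / sqrt r) * r = 1"
        by (simp add: field_simps flip: power2_eq_square)
      then show ?thesis
        using True cscalar_prod_self_real[of "ws ! i"] unfolding scale_def r_def[symmetric]
        by (simp flip: of_real_mult)
    next
      case False
      then show ?thesis
        using corthogonalD[OF ws(1)] ij ws(3) by auto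
    qed
    finally show ?thesis .
  qed
  have vs: "set vs \<subseteq> carrier_vec n" "length vs = n"
    unfolding vs_def using ws(2,3) by auto
  then have "unitary_mat n (mat_of_cols n vs)"
    using orthonormal by (rule unitary_mat_of_orthonormal_cols)
  moreover have "col (mat_of_cols n vs) 0 = vs ! 0"
    using vs \<open>n \<noteq> 0\<close> by (intro col_mat_of_cols) auto
  moreover have "vs ! 0 = scale u \<cdot>\<^sub>v u"
    unfolding vs_def using \<open>n \<noteq> 0\<close> ws(3) ws0 by simp
  ultimately show ?thesis
    using that by metis
qed

section \<open>Rayleigh quotient bounds\<close>

definition spectrum_between :: "complex mat \<Rightarrow> real \<Rightarrow> real \<Rightarrow> bool" where
  "spectrum_between A m M \<longleftrightarrow> (\<forall>k. eigenvalue A k \<longrightarrow> m \<le> Re k \<and> Re k \<le> M)"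

definition quad_form_between :: "nat \<Rightarrow> complex mat \<Rightarrow> real \<Rightarrow> real \<Rightarrow> bool" where
  "quad_form_between n A m M \<longleftrightarrow> (\<forall>x \<in> carrier_vec n.
     m * (cvec_norm x)\<^sup>2 \<le> Re (quad_form A x) \<and> Re (quad_form A x) \<le> M * (cvec_norm x)\<^sup>2)"

lemma spectrum_between_if_quad_form_between:
  assumes "A \<in> carrier_mat n n" "quad_form_between n A m M"
  shows "spectrum_between A m M"
  unfolding spectrum_between_def
proof (intro allI impI)
  fix k assume "eigenvalue A k"
  then obtain x where x: "eigenvector A x k"
    unfolding eigenvalue_def by blast
  then have x_carrier: "x \<in> carrier_vec n" and "x \<noteq> 0\<^sub>v n"
    using assms(1) unfolding eigenvector_def by auto
  then have "0 < (cvec_norm x)\<^sup>2"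
    by (rule cvec_norm_pos)
  then show "m \<le> Re k \<and> Re k \<le> M"
    using assms(2) x_carrier quad_form_eigenvector_Re[OF x]
    unfolding quad_form_between_def by auto
qed

lemma quad_form_between_scalar:
  assumes "m \<le> e" "e \<le> M"
  shows "quad_form_between 1 (mat 1 1 (\<lambda>_. of_real e)) m M"
  unfolding quad_form_between_def
proof
  fix x :: "complex vec" assume "x \<in> carrier_vec 1"
  then have "Re (quad_form (mat 1 1 (\<lambda>_. of_real e)) x) = e * (cvec_norm x)\<^sup>2"
    unfolding quad_form_def cvec_norm_sq
    by (simp add: mult_mat_vec_def scalar_prod_def algebra_simps)
  moreover have "0 \<le> (cvec_norm x)\<^sup>2"
    by simp
  ultimately show "m * (cvec_norm x)\<^sup>2 \<le> Re (quad_form (mat 1 1 (\<lambda>_. of_real e)) x) \<and>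
      Re (quad_form (mat 1 1 (\<lambda>_. of_real e)) x) \<le> M * (cvec_norm x)\<^sup>2"
    using assms by (auto intro: mult_right_mono)
qed

lemma quad_form_between_block_diag:
  assumes "A \<in> carrier_mat n n" "D \<in> carrier_mat p p"
    and "quad_form_between n A m M" "quad_form_between p D m M"
  shows "quad_form_between (n + p) (four_block_mat A (0\<^sub>m n p) (0\<^sub>m p n) D) m M"
  unfolding quad_form_between_def
proof
  fix x :: "complex vec" assume "x \<in> carrier_vec (n + p)"
  then have split: "x = vec_first x n @\<^sub>v vec_last x p"
    by simp
  have "Re (quad_form (four_block_mat A (0\<^sub>m n p) (0\<^sub>m p n) D) x)
      = Re (quad_form A (vec_first x n)) + Re (quad_form D (vec_last x p))"
    by (subst split, subst quad_form_block_diag[OF assms(1,2)]) auto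
  moreover have "(cvec_norm x)\<^sup>2 = (cvec_norm (vec_first x n))\<^sup>2 + (cvec_norm (vec_last x p))\<^sup>2"
    by (subst split, rule cvec_norm_append[of _ n _ p]) auto
  ultimately show "m * (cvec_norm x)\<^sup>2 \<le> Re (quad_form (four_block_mat A (0\<^sub>m n p) (0\<^sub>m p n) D) x) \<and>
      Re (quad_form (four_block_mat A (0\<^sub>m n p) (0\<^sub>m p n) D) x) \<le> M * (cvec_norm x)\<^sup>2"
    using assms(3,4) unfolding quad_form_between_def
    by (simp add: distrib_left add_mono)
qed

lemma quad_form_between_unitary_congruence:
  assumes "unitary_mat n W" "A \<in> carrier_mat n n"
    and "quad_form_between n (mat_adjoint W * A * W) m M"
  shows "quad_form_between n A m M"
  unfolding quad_form_between_def
proof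
  fix x :: "complex vec" assume x: "x \<in> carrier_vec n"
  have W: "W \<in> carrier_mat n n" "mat_adjoint W \<in> carrier_mat n n" "W * mat_adjoint W = 1\<^sub>m n"
    using assms(1) unitary_mat_right_inverse mat_adjoint_carrier unfolding unitary_mat_def by auto
  define y where "y = mat_adjoint W *\<^sub>v x"
  have y: "y \<in> carrier_vec n"
    unfolding y_def using W(2) x by (rule mult_mat_vec_carrier)
  have "W *\<^sub>v y = x"
    unfolding y_def using W x by (simp flip: assoc_mult_mat_vec[of _ n n _ n])
  then have "quad_form A x = quad_form (mat_adjoint W * A * W) y"
    using quad_form_congruence[OF W(1) assms(2) y] by simp
  moreover have "quad_form (1\<^sub>m n) y = quad_form (1\<^sub>m n) x"
    using quad_form_congruence[of "mat_adjoint W" n n "1\<^sub>m n" x] W x unfolding y_def by simp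
  then have "(cvec_norm y)\<^sup>2 = (cvec_norm x)\<^sup>2"
    by (metis quad_form_one x y)
  ultimately show "m * (cvec_norm x)\<^sup>2 \<le> Re (quad_form A x) \<and>
      Re (quad_form A x) \<le> M * (cvec_norm x)\<^sup>2"
    using assms(3) y unfolding quad_form_between_def by metis
qed

lemma unitary_congruence_first_col:
  assumes "unitary_mat n W" "A \<in> carrier_mat n n" "eigenvector A u e" "col W 0 = c \<cdot>\<^sub>v u" "0 < n"
  shows "col (mat_adjoint W * A * W) 0 = e \<cdot>\<^sub>v unit_vec n 0"
proof -
  have W: "W \<in> carrier_mat n n" "mat_adjoint W \<in> carrier_mat n n" "mat_adjoint W * W = 1\<^sub>m n"
    using assms(1) mat_adjoint_carrier unfolding unitary_mat_def by auto
  have u: "u \<in> carrier_vec n" "A *\<^sub>v u = e \<cdot>\<^sub>v u"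
    using assms(2,3) unfolding eigenvector_def by auto
  have col_W: "col W 0 \<in> carrier_vec n"
    using W(1) by (simp add: carrier_vecI)
  have "col (mat_adjoint W * A * W) 0 = (mat_adjoint W * A) *\<^sub>v col W 0"
    using mult_carrier_mat[OF W(2) assms(2)] W(1) assms(5) by (rule col_mult2)
  also have "\<dots> = mat_adjoint W *\<^sub>v (A *\<^sub>v col W 0)"
    using W(2) assms(2) col_W by (rule assoc_mult_mat_vec)
  also have "A *\<^sub>v col W 0 = e \<cdot>\<^sub>v col W 0"
    unfolding assms(4) mult_mat_vec[OF assms(2) u(1)] u(2) smult_smult_assoc
    by (simp add: mult.commute)
  also have "mat_adjoint W *\<^sub>v (e \<cdot>\<^sub>v col W 0) = e \<cdot>\<^sub>v (mat_adjoint W *\<^sub>v col W 0)"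
    using W(2) col_W by (rule mult_mat_vec)
  also have "mat_adjoint W *\<^sub>v col W 0 = col (mat_adjoint W * W) 0"
    using W(2,1) assms(5) by (rule col_mult2[symmetric])
  finally show ?thesis
    using W(3) assms(5) by simp
qed

lemma hermitian_first_col_block:
  assumes B: "hermitian_mat (Suc n) B" and col: "col B 0 = e \<cdot>\<^sub>v unit_vec (Suc n) 0"
  obtains B' where "hermitian_mat n B'"
    "B = four_block_mat (mat 1 1 (\<lambda>_. e)) (0\<^sub>m 1 n) (0\<^sub>m n 1) B'"
proof -
  have carrier: "B \<in> carrier_mat (Suc n) (Suc n)" and adj: "mat_adjoint B = B"
    using B unfolding hermitian_mat_def by auto
  have col_entries: "B $$ (i, 0) = (if i = 0 then e else 0)" if "i < Suc n" for i
    using arg_cong[OF col, of "\<lambda>w. w $ i"] carrier that by auto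
  have row_entries: "B $$ (0, j) = (if j = 0 then e else 0)" if "j < Suc n" for j
  proof -
    have "B $$ (0, j) = cnj (B $$ (j, 0))"
      using arg_cong[OF adj, of "\<lambda>M. M $$ (0, j)"] carrier that by simp
    then show ?thesis
      using col_entries[OF that] col_entries[of 0] by auto
  qed
  define B' where "B' = mat n n (\<lambda>(i, j). B $$ (Suc i, Suc j))"
  have "hermitian_mat n B'"
    unfolding hermitian_mat_def
  proof
    show "B' \<in> carrier_mat n n"
      unfolding B'_def by simp
    have "mat_adjoint B' $$ (i, j) = B' $$ (i, j)" if "i < n" "j < n" for i j
      using arg_cong[OF adj, of "\<lambda>M. M $$ (Suc i, Suc j)"] carrier that by (simp add: B'_def)
    then show "mat_adjoint B' = B'"
      by (intro eq_matI) (auto simp: B'_def)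
  qed
  moreover have "B = four_block_mat (mat 1 1 (\<lambda>_. e)) (0\<^sub>m 1 n) (0\<^sub>m n 1) B'"
  proof (rule eq_matI)
    fix i j assume "i < dim_row (four_block_mat (mat 1 1 (\<lambda>_. e)) (0\<^sub>m 1 n) (0\<^sub>m n 1) B')"
      "j < dim_col (four_block_mat (mat 1 1 (\<lambda>_. e)) (0\<^sub>m 1 n) (0\<^sub>m n 1) B')"
    then have "i < Suc n" "j < Suc n"
      by (auto simp: B'_def)
    then show "B $$ (i, j) = four_block_mat (mat 1 1 (\<lambda>_. e)) (0\<^sub>m 1 n) (0\<^sub>m n 1) B' $$ (i, j)"
      using col_entries row_entries by (cases i; cases j) (auto simp: B'_def)
  qed (use carrier in \<open>auto simp: B'_def\<close>)
  ultimately show ?thesis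
    using that by blast
qed

lemma hermitian_deflation:
  assumes A: "hermitian_mat (Suc n) A"
  obtains W e A' where "unitary_mat (Suc n) W" "hermitian_mat n A'" "eigenvalue A (of_real e)"
    "\<And>k. eigenvalue A' k \<Longrightarrow> eigenvalue A k"
    "mat_adjoint W * A * W = four_block_mat (mat 1 1 (\<lambda>_. of_real e)) (0\<^sub>m 1 n) (0\<^sub>m n 1) A'"
proof -
  have carrier: "A \<in> carrier_mat (Suc n) (Suc n)"
    using A unfolding hermitian_mat_def by auto
  obtain k where k: "eigenvalue A k"
    using spectrum_non_empty[OF carrier] unfolding spectrum_def by auto
  define e where "e = Re k"
  have k_real: "k = of_real e"
    unfolding e_def using hermitian_eigenvalue_real[OF A k] by simp
  obtain u where u: "eigenvector A u k"
    using k unfolding eigenvalue_def by blast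
  then have "u \<in> carrier_vec (Suc n)" "u \<noteq> 0\<^sub>v (Suc n)"
    using carrier unfolding eigenvector_def by auto
  then obtain W c where W: "unitary_mat (Suc n) W" "col W 0 = c \<cdot>\<^sub>v u"
    by (rule unitary_completion)
  have W_carrier: "W \<in> carrier_mat (Suc n) (Suc n)" "mat_adjoint W * W = 1\<^sub>m (Suc n)"
    "W * mat_adjoint W = 1\<^sub>m (Suc n)"
    using W(1) unitary_mat_right_inverse unfolding unitary_mat_def by auto
  define B where "B = mat_adjoint W * A * W"
  have "hermitian_mat (Suc n) B"
    unfolding B_def using A W_carrier(1) by (rule hermitian_congruence)
  moreover have "col B 0 = of_real e \<cdot>\<^sub>v unit_vec (Suc n) 0"
    unfolding B_def k_real[symmetric] using W carrier u by (intro unitary_congruence_first_col) auto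
  ultimately obtain A' where A': "hermitian_mat n A'"
    and B: "B = four_block_mat (mat 1 1 (\<lambda>_. of_real e)) (0\<^sub>m 1 n) (0\<^sub>m n 1) A'"
    by (rule hermitian_first_col_block)
  have A'_carrier: "A' \<in> carrier_mat n n" and B_carrier: "B \<in> carrier_mat (Suc n) (Suc n)"
    using A' \<open>hermitian_mat (Suc n) B\<close> unfolding hermitian_mat_def by auto
  have "char_poly B = char_poly (mat 1 1 (\<lambda>_. of_real e)) * char_poly A'"
    unfolding B using A'_carrier by (intro char_poly_four_block_zeros_col) auto
  moreover have "similar_mat_wit B A (mat_adjoint W) W"
    using W_carrier carrier B_carrier mat_adjoint_carrier[OF W_carrier(1)]
    by (intro similar_mat_witI[of _ _ "Suc n"]) (simp_all add: B_def)
  then have "char_poly B = char_poly A"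
    by (intro char_poly_similar) (auto simp: similar_mat_def)
  ultimately have char_poly_A: "char_poly A = char_poly (mat 1 1 (\<lambda>_. of_real e)) * char_poly A'"
    by simp
  show ?thesis
  proof (rule that[OF W(1) A'])
    show "eigenvalue A (of_real e)"
      using k k_real by simp
    show "eigenvalue A k" if "eigenvalue A' k" for k
      using that char_poly_A eigenvalue_root_char_poly[OF carrier]
        eigenvalue_root_char_poly[OF A'_carrier] by auto
    show "mat_adjoint W * A * W = four_block_mat (mat 1 1 (\<lambda>_. of_real e)) (0\<^sub>m 1 n) (0\<^sub>m n 1) A'"
      using B unfolding B_def .
  qed
qed

lemma hermitian_quad_form_between:
  assumes "hermitian_mat n A" "spectrum_between A m M"
  shows "quad_form_between n A m M"
  using assms
proof (induction n arbitrary: A)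
  case 0
  then show ?case
    unfolding quad_form_between_def quad_form_def cvec_norm_def by (simp add: scalar_prod_def)
next
  case (Suc n)
  obtain W e A' where W: "unitary_mat (Suc n) W" and A': "hermitian_mat n A'"
    and e: "eigenvalue A (of_real e)" and eigenvalues_A': "\<And>k. eigenvalue A' k \<Longrightarrow> eigenvalue A k"
    and block: "mat_adjoint W * A * W
      = four_block_mat (mat 1 1 (\<lambda>_. of_real e)) (0\<^sub>m 1 n) (0\<^sub>m n 1) A'"
    using hermitian_deflation[OF Suc.prems(1)] by metis
  have "spectrum_between A' m M"
    using Suc.prems(2) eigenvalues_A' unfolding spectrum_between_def by blast
  then have "quad_form_between n A' m M"
    using Suc.IH A' by blast
  moreover have "m \<le> e" "e \<le> M"
    using Suc.prems(2) e unfolding spectrum_between_def by force+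
  ultimately have "quad_form_between (1 + n) (mat_adjoint W * A * W) m M"
    unfolding block using A' unfolding hermitian_mat_def
    by (intro quad_form_between_block_diag quad_form_between_scalar) auto
  then show ?case
    using W Suc.prems(1) unfolding hermitian_mat_def
    by (auto intro: quad_form_between_unitary_congruence)
qed

section \<open>Inverses and compressions\<close>

lemma eigenvalue_right_inverse:
  fixes A B :: "'a :: field mat"
  assumes "A \<in> carrier_mat n n" "B \<in> carrier_mat n n" "A * B = 1\<^sub>m n" "eigenvalue B k"
  shows "k \<noteq> 0" "eigenvalue A (1 / k)"
proof -
  obtain y where y: "y \<in> carrier_vec n" "y \<noteq> 0\<^sub>v n" "B *\<^sub>v y = k \<cdot>\<^sub>v y"
    using assms(2,4) unfolding eigenvalue_def eigenvector_def by auto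
  have "y = (A * B) *\<^sub>v y"
    using assms(3) y(1) by simp
  also have "\<dots> = k \<cdot>\<^sub>v (A *\<^sub>v y)"
    using assms(1,2) y by (simp add: mult_mat_vec)
  finally have y_eq: "y = k \<cdot>\<^sub>v (A *\<^sub>v y)" .
  show "k \<noteq> 0"
  proof
    assume "k = 0"
    moreover have "0 \<cdot>\<^sub>v (A *\<^sub>v y) = 0\<^sub>v n"
      using assms(1) by (intro eq_vecI) auto
    ultimately show False
      using y_eq y(2) by simp
  qed
  then have "A *\<^sub>v y = (1 / k) \<cdot>\<^sub>v y"
    by (subst (2) y_eq) (simp add: smult_smult_assoc)
  then show "eigenvalue A (1 / k)"
    unfolding eigenvalue_def eigenvector_def using assms(1) y(1,2) by auto
qed

lemma minv_inverse:
  assumes A: "A \<in> carrier_mat n n" and no_kernel: "\<not> eigenvalue A 0"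
  shows "minv A \<in> carrier_mat n n" "A * minv A = 1\<^sub>m n" "minv A * A = 1\<^sub>m n"
proof -
  have "det A \<noteq> 0"
  proof
    assume "det A = 0"
    then obtain v where "v \<in> carrier_vec n" "v \<noteq> 0\<^sub>v n" "A *\<^sub>v v = 0\<^sub>v n"
      using det_0_iff_vec_prod_zero[OF A] by blast
    moreover have "0 \<cdot>\<^sub>v v = 0\<^sub>v n"
      using \<open>v \<in> carrier_vec n\<close> by (intro eq_vecI) auto
    ultimately have "eigenvalue A 0"
      unfolding eigenvalue_def eigenvector_def using A by auto
    with no_kernel show False ..
  qed
  then have "A \<in> Units (ring_mat TYPE(complex) n ())"
    by (rule det_non_zero_imp_unit[OF A])
  then obtain B where "mat_inverse A = Some B"
    using mat_inverse(1)[OF A, where b = "()"] by (cases "mat_inverse A") auto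
  then show "minv A \<in> carrier_mat n n" "A * minv A = 1\<^sub>m n" "minv A * A = 1\<^sub>m n"
    using mat_inverse(2)[OF A] unfolding minv_def by auto
qed

lemma hermitian_minv:
  assumes A: "hermitian_mat n A" and spectrum: "spectrum_between A m M" and "0 < m"
  shows "hermitian_mat n (minv A)" "spectrum_between (minv A) (1 / M) (1 / m)"
proof -
  have A_carrier: "A \<in> carrier_mat n n" and A_adj: "mat_adjoint A = A"
    using A unfolding hermitian_mat_def by auto
  have "\<not> eigenvalue A 0"
    using spectrum \<open>0 < m\<close> unfolding spectrum_between_def by force
  note B = minv_inverse[OF A_carrier this]
  have "mat_adjoint (minv A) * A = 1\<^sub>m n"
    using mat_adjoint_mult[OF A_carrier B(1)] B(2) A_adj by simp
  then have "minv A = mat_adjoint (minv A) * (A * minv A)"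
    using A_carrier B(1) mat_adjoint_carrier[OF B(1)] by (simp flip: assoc_mult_mat[of _ n n A n])
  then show herm: "hermitian_mat n (minv A)"
    unfolding hermitian_mat_def using B(1,2) mat_adjoint_carrier[OF B(1)] by simp
  show "spectrum_between (minv A) (1 / M) (1 / m)"
    unfolding spectrum_between_def
  proof (intro allI impI)
    fix k assume k: "eigenvalue (minv A) k"
    then obtain r where r: "k = of_real r"
      using hermitian_eigenvalue_real[OF herm] by (auto elim: Reals_cases)
    have "eigenvalue A (1 / k)"
      using eigenvalue_right_inverse(2)[OF A_carrier B(1,2) k] .
    then have "m \<le> 1 / r" "1 / r \<le> M"
      using spectrum unfolding spectrum_between_def r
      by (metis Re_complex_of_real of_real_divide of_real_1)+
    moreover from this have "0 < r"
      using \<open>0 < m\<close> by (metis order_less_le_trans zero_less_divide_1_iff)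
    moreover from calculation have "0 < M"
      by (metis order_less_le_trans zero_less_divide_1_iff)
    ultimately show "1 / M \<le> Re k \<and> Re k \<le> 1 / m"
      using \<open>0 < m\<close> unfolding r by (auto simp: field_simps)
  qed
qed

lemma compression_spectrum_between:
  assumes Phi: "hermitian_mat n Phi" "spectrum_between Phi l L" "0 \<le> l" "l \<le> L"
    and Psi: "Psi \<in> carrier_mat d n" "spectrum_between (Psi * mat_adjoint Psi) a b" "0 \<le> a"
  shows "hermitian_mat d (Psi * Phi * mat_adjoint Psi)"
    "spectrum_between (Psi * Phi * mat_adjoint Psi) (a * l) (b * L)"
proof -
  have Psi_adj: "mat_adjoint Psi \<in> carrier_mat n d"
    using Psi(1) by (rule mat_adjoint_carrier)
  have one: "hermitian_mat n (1\<^sub>m n)"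
    unfolding hermitian_mat_def by simp
  show herm: "hermitian_mat d (Psi * Phi * mat_adjoint Psi)"
    using hermitian_congruence[OF Phi(1) Psi_adj] by simp
  have "hermitian_mat d (Psi * mat_adjoint Psi)"
    using hermitian_congruence[OF one Psi_adj] Psi(1) by simp
  then have gram: "quad_form_between d (Psi * mat_adjoint Psi) a b"
    using Psi(2) by (rule hermitian_quad_form_between)
  have "quad_form_between d (Psi * Phi * mat_adjoint Psi) (a * l) (b * L)"
    unfolding quad_form_between_def
  proof
    fix x :: "complex vec" assume x: "x \<in> carrier_vec d"
    define y where "y = mat_adjoint Psi *\<^sub>v x"
    have y: "y \<in> carrier_vec n"
      unfolding y_def using Psi_adj x by (rule mult_mat_vec_carrier)
    have "quad_form (Psi * Phi * mat_adjoint Psi) x = quad_form Phi y"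
      using quad_form_congruence[OF Psi_adj _ x, of Phi] Phi(1)
      unfolding y_def hermitian_mat_def by simp
    moreover have "(cvec_norm y)\<^sup>2 = Re (quad_form (Psi * mat_adjoint Psi) x)"
      using quad_form_congruence[OF Psi_adj _ x, of "1\<^sub>m n"] quad_form_one[OF y] Psi(1)
      unfolding y_def by simp
    moreover have "l * (cvec_norm y)\<^sup>2 \<le> Re (quad_form Phi y)"
      "Re (quad_form Phi y) \<le> L * (cvec_norm y)\<^sup>2"
      using hermitian_quad_form_between[OF Phi(1,2)] y unfolding quad_form_between_def by auto
    moreover have "a * (cvec_norm x)\<^sup>2 \<le> Re (quad_form (Psi * mat_adjoint Psi) x)"
      "Re (quad_form (Psi * mat_adjoint Psi) x) \<le> b * (cvec_norm x)\<^sup>2"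
      using gram x unfolding quad_form_between_def by auto
    ultimately have "l * (a * (cvec_norm x)\<^sup>2) \<le> Re (quad_form (Psi * Phi * mat_adjoint Psi) x)"
      "Re (quad_form (Psi * Phi * mat_adjoint Psi) x) \<le> L * (b * (cvec_norm x)\<^sup>2)"
      using Phi(3,4) by (auto intro: order_trans mult_left_mono)
    then show "a * l * (cvec_norm x)\<^sup>2 \<le> Re (quad_form (Psi * Phi * mat_adjoint Psi) x) \<and>
        Re (quad_form (Psi * Phi * mat_adjoint Psi) x) \<le> b * L * (cvec_norm x)\<^sup>2"
      by (simp add: mult_ac)
  qed
  then show "spectrum_between (Psi * Phi * mat_adjoint Psi) (a * l) (b * L)"
    using herm unfolding hermitian_mat_def by (auto intro: spectrum_between_if_quad_form_between)
qed

section \<open>Output powers of the MVDR beamformers\<close>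

lemma herm_pos_def_eigenvalue_pos:
  assumes "herm_pos_def n A" "eigenvalue A k"
  shows "0 < Re k"
proof -
  obtain x where x: "eigenvector A x k"
    using assms(2) unfolding eigenvalue_def by blast
  then have "x \<in> carrier_vec n" "x \<noteq> 0\<^sub>v n"
    using assms(1) unfolding eigenvector_def herm_pos_def_def by auto
  then have "0 < Re (quad_form A x)" "0 < (cvec_norm x)\<^sup>2"
    using assms(1) cvec_norm_pos unfolding herm_pos_def_def by auto
  then show ?thesis
    unfolding quad_form_eigenvector_Re[OF x] by (simp add: zero_less_mult_iff)
qed

lemma p_mvdr_bounds:
  assumes "hermitian_mat n Phi" "spectrum_between Phi m M" "0 < m"
    and "g \<in> carrier_vec n" "g \<noteq> 0\<^sub>v n"
  shows "m / (cvec_norm g)\<^sup>2 \<le> p_mvdr Phi g \<and> p_mvdr Phi g \<le> M / (cvec_norm g)\<^sup>2"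
proof -
  have norm: "0 < (cvec_norm g)\<^sup>2"
    using assms(4,5) by (rule cvec_norm_pos)
  have "m * (cvec_norm g)\<^sup>2 \<le> M * (cvec_norm g)\<^sup>2"
    using hermitian_quad_form_between[OF assms(1,2)] assms(4)
    unfolding quad_form_between_def by (meson order_trans)
  then have "0 < M"
    using norm \<open>0 < m\<close> by (simp add: mult_le_cancel_right)
  define q where "q = Re (quad_form (minv Phi) g)"
  have q: "(cvec_norm g)\<^sup>2 / M \<le> q" "q \<le> (cvec_norm g)\<^sup>2 / m"
    using hermitian_quad_form_between[OF hermitian_minv[OF assms(1-3)]] assms(4)
    unfolding quad_form_between_def q_def by auto
  have "0 < q"
    using q(1) norm \<open>0 < M\<close> by (meson divide_pos_pos less_le_trans)
  then have "inverse ((cvec_norm g)\<^sup>2 / m) \<le> inverse q"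
    using q(2) by (rule le_imp_inverse_le[rotated])
  moreover have "inverse q \<le> inverse ((cvec_norm g)\<^sup>2 / M)"
    using q(1) by (rule le_imp_inverse_le) (use norm \<open>0 < M\<close> in simp)
  ultimately show ?thesis
    unfolding p_mvdr_def q_def[symmetric] inverse_divide by (rule conjI)
qed

(* minv A is an unspecified value unless A is invertible, hence the carrier hypothesis. *)
lemma p_cmvdr_eq_p_mvdr:
  assumes "Psi \<in> carrier_mat d n" "g \<in> carrier_vec n"
    and "minv (Psi * Phi * mat_adjoint Psi) \<in> carrier_mat d d"
  shows "p_cmvdr Phi Psi g = p_mvdr (Psi * Phi * mat_adjoint Psi) (Psi *\<^sub>v g)"
  unfolding p_cmvdr_def p_mvdr_def using quad_form_congruence[OF assms(1,3,2)] by simp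

lemma p_cmvdr_bounds:
  assumes Phi: "hermitian_mat n Phi" "spectrum_between Phi l L" "0 < l" "l \<le> L"
    and Psi: "Psi \<in> carrier_mat d n" "spectrum_between (Psi * mat_adjoint Psi) a b" "0 < a"
    and g: "g \<in> carrier_vec n" "g \<noteq> 0\<^sub>v n"
    and norm_Psi_g: "a' * (cvec_norm g)\<^sup>2 \<le> (cvec_norm (Psi *\<^sub>v g))\<^sup>2"
      "(cvec_norm (Psi *\<^sub>v g))\<^sup>2 \<le> b' * (cvec_norm g)\<^sup>2" "0 < a'"
  shows "a * l / (b' * (cvec_norm g)\<^sup>2) \<le> p_cmvdr Phi Psi g \<and>
    p_cmvdr Phi Psi g \<le> b * L / (a' * (cvec_norm g)\<^sup>2)"
proof -
  note compressed = compression_spectrum_between[OF Phi(1,2) less_imp_le[OF Phi(3)] Phi(4)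
      Psi(1,2) less_imp_le[OF Psi(3)]]
  have "0 < a * l"
    using Phi(3) Psi(3) by simp
  then have "minv (Psi * Phi * mat_adjoint Psi) \<in> carrier_mat d d"
    using hermitian_minv(1)[OF compressed] unfolding hermitian_mat_def by simp
  then have p_cmvdr: "p_cmvdr Phi Psi g = p_mvdr (Psi * Phi * mat_adjoint Psi) (Psi *\<^sub>v g)"
    using Psi(1) g(1) by (intro p_cmvdr_eq_p_mvdr)
  have G: "0 < a' * (cvec_norm g)\<^sup>2"
    using cvec_norm_pos[OF g] norm_Psi_g(3) by simp
  then have H: "0 < (cvec_norm (Psi *\<^sub>v g))\<^sup>2"
    using norm_Psi_g(1) by linarith
  then have "Psi *\<^sub>v g \<noteq> 0\<^sub>v d"
    by auto
  then have p: "a * l / (cvec_norm (Psi *\<^sub>v g))\<^sup>2 \<le> p_cmvdr Phi Psi g \<and>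
      p_cmvdr Phi Psi g \<le> b * L / (cvec_norm (Psi *\<^sub>v g))\<^sup>2"
    unfolding p_cmvdr using compressed \<open>0 < a * l\<close> Psi(1) g(1)
    by (intro p_mvdr_bounds) auto
  then have "a * l \<le> b * L"
    using H by (auto simp: divide_le_cancel dest: order_trans)
  then have "0 \<le> b * L"
    using \<open>0 < a * l\<close> by linarith
  have "0 < b' * (cvec_norm g)\<^sup>2"
    using norm_Psi_g(2) H by linarith
  then have "a * l / (b' * (cvec_norm g)\<^sup>2) \<le> a * l / (cvec_norm (Psi *\<^sub>v g))\<^sup>2"
    using \<open>0 < a * l\<close> H
    by (intro divide_left_mono[OF norm_Psi_g(2)]) (auto intro: mult_pos_pos)
  moreover have "b * L / (cvec_norm (Psi *\<^sub>v g))\<^sup>2 \<le> b * L / (a' * (cvec_norm g)\<^sup>2)"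
    using norm_Psi_g(1) \<open>0 \<le> b * L\<close> G H by (intro divide_left_mono) auto
  ultimately show ?thesis
    using p by linarith
qed

theorem mainTheorem1:
  fixes Nd Nm :: nat and Phi Psi :: "complex mat" and g :: "complex vec"
    and lmax lmin \<delta> :: real
  assumes "0 < Nd" and "Nd \<le> Nm"
    and "herm_pos_def Nm Phi"
    and "eigenvalue Phi (complex_of_real lmax)" and "\<forall>k. eigenvalue Phi k \<longrightarrow> Re k \<le> lmax"
    and "eigenvalue Phi (complex_of_real lmin)" and "\<forall>k. eigenvalue Phi k \<longrightarrow> lmin \<le> Re k"
    and "g \<in> carrier_vec Nm" and "g \<noteq> 0\<^sub>v Nm"
    and "Psi \<in> carrier_mat Nd Nm"
    and "0 < \<delta>" and "\<delta> < 1"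
    and "\<forall>k. eigenvalue (Psi * mat_adjoint Psi) k \<longrightarrow> k \<in> complex_of_real ` {1 - \<delta> .. 1 + \<delta>}"
    and "(1 - \<delta>) * (cvec_norm g)^2 \<le> (cvec_norm (Psi *\<^sub>v g))^2"
    and "(cvec_norm (Psi *\<^sub>v g))^2 \<le> (1 + \<delta>) * (cvec_norm g)^2"
  shows "lmin / (cvec_norm g)^2 \<le> p_mvdr Phi g \<and> p_mvdr Phi g \<le> lmax / (cvec_norm g)^2
    \<and> (1 - \<delta>) * lmin / ((1 + \<delta>) * (cvec_norm g)^2) \<le> p_cmvdr Phi Psi g
    \<and> p_cmvdr Phi Psi g \<le> (1 + \<delta>) * lmax / ((1 - \<delta>) * (cvec_norm g)^2)
    \<and> (1 - \<delta>) * lmin / ((1 + \<delta>) * (cvec_norm g)^2) - lmax / (cvec_norm g)^2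
        \<le> p_cmvdr Phi Psi g - p_mvdr Phi g
    \<and> p_cmvdr Phi Psi g - p_mvdr Phi g
        \<le> (1 + \<delta>) * lmax / ((1 - \<delta>) * (cvec_norm g)^2) - lmin / (cvec_norm g)^2"
proof -
  have Phi: "hermitian_mat Nm Phi" "spectrum_between Phi lmin lmax"
    using assms(3,5,7) unfolding herm_pos_def_def hermitian_mat_def spectrum_between_def by auto
  have "0 < lmin"
    using herm_pos_def_eigenvalue_pos[OF assms(3,6)] by simp
  have "lmin \<le> lmax"
    using assms(5,6) by force
  have "spectrum_between (Psi * mat_adjoint Psi) (1 - \<delta>) (1 + \<delta>)"
    using assms(13) unfolding spectrum_between_def by force
  then have "(1 - \<delta>) * lmin / ((1 + \<delta>) * (cvec_norm g)\<^sup>2) \<le> p_cmvdr Phi Psi g \<and>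
      p_cmvdr Phi Psi g \<le> (1 + \<delta>) * lmax / ((1 - \<delta>) * (cvec_norm g)\<^sup>2)"
    using Phi \<open>0 < lmin\<close> \<open>lmin \<le> lmax\<close> assms(8-10,12,14,15)
    by (intro p_cmvdr_bounds) auto
  moreover have "lmin / (cvec_norm g)\<^sup>2 \<le> p_mvdr Phi g \<and> p_mvdr Phi g \<le> lmax / (cvec_norm g)\<^sup>2"
    using Phi \<open>0 < lmin\<close> assms(8,9) by (rule p_mvdr_bounds)
  ultimately show ?thesis
    by linarith
qed

end
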